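(* Let $q$ be a prime power, and let $\chi'$ be the canonical additive character of $\mathbb{F}_{q^2}$. For integers $e_1,e_2$ and $a,b\in\mathbb{F}_{q^2}$ define $$S_{(e_1,e_2)}(a,b):=\sum_{x\in\mathbb{F}_{q^2}^*}\chi'\!\left(a x^{(q+1)e_1}+b x^{e_2}\right),\qquad T_{(e_1,e_2)}(a,b):=\sum_{y\in\mathbb{F}_q^*}S_{(e_1,e_2)}(ya,yb).$$ Suppose $a^q+a\neq 0$, $b\neq 0$ and $\gcd(q+1,e_2)=1$. Then $\gcd(q-1,2e_1-e_2)=1$ if and only if $T_{(e_1,e_2)}(a,b)=1$.
   Context: For a finite field $F$ of characteristic $p$, the canonical additive character is $\chi(c)=e^{2\pi i\,\mathrm{Tr}_{F/\mathbb{F}_p}(c)/p}$. *)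

theory Defs
  imports Complex_Main "HOL-Computational_Algebra.Primes"
begin

definition ff_degree :: "'a::{field,finite} itself \<Rightarrow> nat" where
  "ff_degree T = (THE n. card (UNIV::'a set) = CHAR('a) ^ n)"

definition abs_trace :: "'a::{field,finite} \<Rightarrow> 'a" where
  "abs_trace c = (\<Sum>i<ff_degree TYPE('a). c ^ (CHAR('a) ^ i))"

text \<open>Canonical additive character chi(c) = exp(2 pi i Tr(c)/p), where Tr(c) in F_p
  is identified with its representative k in {0..p-1}.\<close>
definition can_add_char :: "'a::{field,finite} \<Rightarrow> complex" where
  "can_add_char c =
     (let k = (THE k. k < CHAR('a) \<and> of_nat k = abs_trace c)
      in cis (2 * pi * real k / real CHAR('a)))"

definition S_sum :: "nat \<Rightarrow> int \<Rightarrow> int \<Rightarrow> 'a::{field,finite} \<Rightarrow> 'a \<Rightarrow> complex" where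
  "S_sum q e1 e2 a b =
     (\<Sum>x\<in>UNIV - {0}. can_add_char (a * x powi (int (q + 1) * e1) + b * x powi e2))"

text \<open>F_q inside F_{q^2} is the subfield {y. y^q = y}.\<close>
definition T_sum :: "nat \<Rightarrow> int \<Rightarrow> int \<Rightarrow> 'a::{field,finite} \<Rightarrow> 'a \<Rightarrow> complex" where
  "T_sum q e1 e2 a b = (\<Sum>y\<in>{y::'a. y ^ q = y \<and> y \<noteq> 0}. S_sum q e1 e2 (y * a) (y * b))"

end

theory Submission
  imports Defs "HOL-Number_Theory.Residues" "HOL-Computational_Algebra.Polynomial" "HOL-Library.Real_Mod"
begin

text \<open>Write Tr(c) = c + c^q for the trace of F_(q^2)/F_q. The canonical character is
  nontrivial on every line F_q t with Tr(t) \<noteq> 0, so the sum of \<chi>'(y t) over y \<in> F_q^* is q - 1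
  if Tr(t) = 0 and -1 otherwise. Hence T = q N - (q^2 - 1), where N counts the x \<noteq> 0 with
  Tr(a x^((q+1) e1) + b x^e2) = 0, and T = 1 iff N = q.

  Split F_(q^2)^* into the q + 1 cosets x0 F_q^*, indexed by x0^(q-1) in the group of
  (q+1)-th roots of unity. On the coset of x0 the trace condition reads l^d C = -B with
  d = 2 e1 - e2, C \<noteq> 0 and B = Tr(b x0^e2); as x \<mapsto> x^e2 permutes the (q+1)-th roots of
  unity, B = 0 on exactly one coset. If d is prime to q - 1, every other coset contains exactly
  one zero, so N = q. Conversely, every coset contributes a multiple of the kernel size h of
  l \<mapsto> l^d on F_q^*; if N = q, then h divides both q and q - 1 = |F_q^*|, so the d-th power map
  is injective on F_q^* and d is prime to q - 1.\<close>

section \<open>Power maps on finite multiplicative groups\<close>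

definition mult_subgroup :: "'a::field set \<Rightarrow> bool" where
  "mult_subgroup G \<longleftrightarrow> 0 \<notin> G \<and> (\<forall>x\<in>G. \<forall>y\<in>G. x * y \<in> G) \<and> (\<forall>x\<in>G. inverse x \<in> G)"

lemma mult_subgroup_nonzero: "mult_subgroup (UNIV - {0::'a::field})"
  by (simp add: mult_subgroup_def)

lemma mult_subgroup_roots_of_unity:
  "n > 0 \<Longrightarrow> mult_subgroup {z::'a::field. z ^ n = 1}"
  by (auto simp: mult_subgroup_def power_mult_distrib power_inverse power_0_left)

lemma
  fixes c :: "'a::idom"
  assumes "n > 0"
  shows finite_power_eq: "finite {x. x ^ n = c}"
    and card_power_eq_le: "card {x. x ^ n = c} \<le> n"
proof -
  let ?P = "monom 1 n + [:-c:] :: 'a poly"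
  have deg: "degree ?P = n"
    using assms by (subst degree_add_eq_left) (auto simp: degree_monom_eq)
  hence "?P \<noteq> 0"
    using assms by auto
  moreover have roots: "{x. poly ?P x = 0} = {x. x ^ n = c}"
    by (auto simp: poly_monom)
  ultimately show "finite {x. x ^ n = c}" "card {x. x ^ n = c} \<le> n"
    using poly_roots_finite[of ?P] card_poly_roots_bound[of ?P] deg by auto
qed

lemma power_card_mult_subgroup:
  assumes "finite G" "mult_subgroup G" "x \<in> G"
  shows "x ^ card G = 1"
proof -
  have G: "0 \<notin> G" "x \<noteq> 0" "\<And>y. y \<in> G \<Longrightarrow> x * y \<in> G" "\<And>y. y \<in> G \<Longrightarrow> inverse x * y \<in> G"
    using assms unfolding mult_subgroup_def by auto
  have "prod id G = (\<Prod>y\<in>G. x * y)"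
    using G assms(3) by (intro prod.reindex_bij_witness[of _ "\<lambda>y. x * y" "\<lambda>y. inverse x * y"]) auto
  also have "\<dots> = x ^ card G * prod id G"
    by (simp add: prod.distrib)
  finally have "(x ^ card G - 1) * prod id G = 0"
    by (simp add: algebra_simps)
  moreover have "prod id G \<noteq> 0"
    using G assms(1) by simp
  ultimately show ?thesis by simp
qed

lemma nonzero_power_card_minus_1:
  fixes x :: "'a::{field,finite}"
  assumes "x \<noteq> 0"
  shows "x ^ (card (UNIV::'a set) - 1) = 1"
  using power_card_mult_subgroup[OF _ mult_subgroup_nonzero, of x] assms
  by (simp add: card_Diff_subset)

lemma power_fibre_eq_image_kernel:
  assumes "mult_subgroup G" "x\<^sub>0 \<in> G"
  shows "{x\<in>G. x ^ n = x\<^sub>0 ^ n} = (\<lambda>h. x\<^sub>0 * h) ` {h\<in>G. h ^ n = 1}"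
proof -
  have G: "x\<^sub>0 \<noteq> 0" "inverse x\<^sub>0 \<in> G" "\<And>x y. x \<in> G \<Longrightarrow> y \<in> G \<Longrightarrow> x * y \<in> G"
    using assms unfolding mult_subgroup_def by auto
  show ?thesis
  proof safe
    fix x assume x: "x \<in> G" "x ^ n = x\<^sub>0 ^ n"
    have "x = x\<^sub>0 * (inverse x\<^sub>0 * x)" "inverse x\<^sub>0 * x \<in> G" "(inverse x\<^sub>0 * x) ^ n = 1"
      using G x by (simp_all add: power_mult_distrib power_inverse)
    thus "x \<in> (\<lambda>h. x\<^sub>0 * h) ` {h\<in>G. h ^ n = 1}" by blast
  qed (use G assms(2) in \<open>auto simp: power_mult_distrib\<close>)
qed

lemma card_power_fibre:
  assumes "mult_subgroup G" "x\<^sub>0 \<in> G"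
  shows "card {x\<in>G. x ^ n = x\<^sub>0 ^ n} = card {x\<in>G. x ^ n = 1}"
proof -
  have "x\<^sub>0 \<noteq> 0" using assms unfolding mult_subgroup_def by auto
  thus ?thesis
    unfolding power_fibre_eq_image_kernel[OF assms] by (auto intro!: card_image inj_onI)
qed

lemma card_kernel_dvd_card_power_preimage:
  assumes "mult_subgroup G"
  shows "card {x\<in>G. x ^ n = 1} dvd card {x\<in>G. x ^ n = r}"
proof (cases "\<exists>x\<^sub>0\<in>G. x\<^sub>0 ^ n = r")
  case True
  then obtain x\<^sub>0 where "x\<^sub>0 \<in> G" "r = x\<^sub>0 ^ n" by auto
  thus ?thesis using card_power_fibre[OF assms] by simp
next
  case False
  hence "{x\<in>G. x ^ n = r} = {}" by auto
  thus ?thesis by (metis card.empty dvd_0_right)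
qed

lemma card_eq_card_kernel_mult_card_image:
  assumes "finite G" "mult_subgroup G"
  shows "card G = card {x\<in>G. x ^ n = 1} * card ((\<lambda>x. x ^ n) ` G)"
proof -
  have "card G = (\<Sum>z\<in>(\<lambda>x. x ^ n) ` G. card {x\<in>G. x ^ n = z})"
    using sum.group[of G "(\<lambda>x. x ^ n) ` G" "\<lambda>x. x ^ n" "\<lambda>_. 1::nat"] assms(1) by simp
  also have "\<dots> = (\<Sum>z\<in>(\<lambda>x. x ^ n) ` G. card {x\<in>G. x ^ n = 1})"
    using card_power_fibre[OF assms(2)] by (intro sum.cong) auto
  finally show ?thesis by simp
qed

lemma power_eq_power_mod:
  fixes x :: "'a::monoid_mult"
  assumes "x ^ N = 1"
  shows "x ^ m = x ^ (m mod N)"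
proof -
  have "x ^ m = x ^ (N * (m div N) + m mod N)"
    by simp
  also have "\<dots> = (x ^ N) ^ (m div N) * x ^ (m mod N)"
    by (simp only: power_add power_mult)
  finally show ?thesis
    using assms by simp
qed

lemma power_int_eq_power_mod:
  fixes x :: "'a::field"
  assumes "x ^ N = 1" "N > 0"
  shows "x powi e = x ^ nat (e mod int N)"
proof -
  have "x \<noteq> 0" using assms by (auto simp: power_0_left)
  hence "x powi e = x powi (int N * (e div int N)) * x powi (e mod int N)"
    by (simp flip: power_int_add)
  also have "x powi (int N * (e div int N)) = 1"
    by (simp add: power_int_mult assms)
  finally show ?thesis
    using assms by (simp add: power_int_nonneg_exp)
qed

lemma gcd_int_eq_1_iff_coprime_mod:
  assumes "N > 0"
  shows "gcd (int N) d = 1 \<longleftrightarrow> coprime (nat (d mod int N)) N"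
proof -
  have "gcd (int N) d = gcd (int N) (d mod int N)"
    using assms by (simp add: gcd_mod_right)
  also have "d mod int N = int (nat (d mod int N))"
    using assms by simp
  also have "gcd (int N) (int (nat (d mod int N))) = int (gcd N (nat (d mod int N)))"
    by (rule gcd_int_int_eq)
  finally have "gcd (int N) d = 1 \<longleftrightarrow> gcd N (nat (d mod int N)) = 1"
    by (simp only: of_nat_eq_1_iff)
  also have "\<dots> \<longleftrightarrow> coprime (nat (d mod int N)) N"
    by (simp only: coprime_iff_gcd_eq_1 gcd.commute)
  finally show ?thesis .
qed

text \<open>The inverse of the m-th power map is the u-th power map, where m u \<equiv> 1 (mod N).\<close>
lemma card_roots_of_unity_power_preimage:
  fixes r :: "'a::field"
  assumes "N > 0" "coprime m N" "r ^ N = 1"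
  shows "card {z. z ^ N = 1 \<and> z ^ m = r} = 1"
proof -
  obtain u where u: "[m * u = 1] (mod N)"
    using cong_solve_coprime_nat[OF assms(2)] by auto
  have inverse_power: "z ^ (m * u) = z" if "z ^ N = 1" for z :: 'a
    using power_eq_power_mod[OF that, of "m * u"] power_eq_power_mod[OF that, of 1] u
    by (simp add: cong_def)
  have "{z. z ^ N = 1 \<and> z ^ m = r} = {r ^ u}"
  proof safe
    fix z :: 'a assume "z ^ N = 1"
    thus "z = (z ^ m) ^ u" using inverse_power by (simp add: power_mult)
  next
    have "(r ^ u) ^ N = (r ^ N) ^ u" by (metis power_mult mult.commute)
    thus "(r ^ u) ^ N = 1" using assms(3) by simp
    show "(r ^ u) ^ m = r" using inverse_power[OF assms(3)] by (metis power_mult mult.commute)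
  qed
  thus ?thesis by simp
qed

text \<open>Every element of G = {z. z^N = 1} is an n-th power, hence satisfies z^(N / gcd n N) = 1;
  counting roots forces gcd n N = 1.\<close>
lemma coprime_if_power_kernel_trivial:
  fixes n N :: nat
  assumes N: "N > 0" and card_G: "card {z::'a::field. z ^ N = 1} = N"
    and kernel: "card {z::'a. z ^ N = 1 \<and> z ^ n = 1} = 1"
  shows "coprime n N"
proof -
  define G where "G = {z::'a. z ^ N = 1}"
  have fin: "finite G"
    using card_G N unfolding G_def by (intro card_ge_0_finite) simp
  have subgroup: "mult_subgroup G"
    unfolding G_def using N by (rule mult_subgroup_roots_of_unity)
  have "(z ^ n) ^ N = (z ^ N) ^ n" for z :: 'a
    by (simp only: power_mult[symmetric] mult.commute)
  hence "(\<lambda>z. z ^ n) ` G \<subseteq> G"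
    unfolding G_def by auto
  moreover have "card ((\<lambda>z. z ^ n) ` G) = card G"
    using card_eq_card_kernel_mult_card_image[OF fin subgroup, of n] kernel by (simp add: G_def)
  ultimately have surj: "(\<lambda>z. z ^ n) ` G = G"
    using fin by (intro card_subset_eq)
  define g where "g = gcd n N"
  have g: "g > 0" "g dvd N" "g dvd n"
    using N unfolding g_def by auto
  have "G \<subseteq> {z. z ^ (N div g) = 1}"
  proof
    fix z assume "z \<in> G"
    then obtain u where u: "u ^ N = 1" "z = u ^ n"
      using surj unfolding G_def by force
    have "n * (N div g) = N * (n div g)"
      using g by (metis mult.commute div_mult_swap)
    hence "z ^ (N div g) = (u ^ N) ^ (n div g)"
      unfolding u(2) by (simp only: power_mult[symmetric])
    thus "z \<in> {z. z ^ (N div g) = 1}"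
      using u(1) by simp
  qed
  moreover have "N div g > 0"
    using g N by (simp add: div_greater_zero_iff dvd_imp_le)
  ultimately have "card G \<le> card {z::'a. z ^ (N div g) = 1}"
    by (intro card_mono finite_power_eq)
  also have "\<dots> \<le> N div g"
    using \<open>N div g > 0\<close> by (rule card_power_eq_le)
  finally have "\<not> N div g < N" using card_G by (simp add: G_def)
  hence "g = 1"
    using g N div_less_dividend[of g N] by linarith
  thus ?thesis
    unfolding g_def by (simp add: coprime_iff_gcd_eq_1)
qed

section \<open>Finite fields of order q^2\<close>

locale finite_field_q2 =
  fixes p k q :: nat and field :: "'a::{field,finite} itself"
  assumes prime_p: "prime p" and k_pos: "k > 0" and q_def: "q = p ^ k"
    and card_field: "card (UNIV::'a set) = q ^ 2"
begin

lemma p_gt_1: "p > 1"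
  using prime_p by (rule prime_gt_1_nat)

lemma q_ge_2: "q \<ge> 2"
  using prime_ge_2_nat[OF prime_p] self_le_power[of p k] k_pos p_gt_1 q_def by simp

lemma CHAR_eq: "CHAR('a) = p"
proof -
  have "CHAR('a) dvd p ^ (2 * k)"
    using CHAR_dvd_CARD[where 'a='a] card_field q_def by (simp add: power_mult mult.commute)
  moreover have "prime CHAR('a)"
    by (rule prime_CHAR_semidom) (simp add: finite_imp_CHAR_pos)
  ultimately show ?thesis
    using prime_dvd_power primes_dvd_imp_eq prime_p by blast
qed

lemma ff_degree_eq: "ff_degree TYPE('a) = 2 * k"
proof -
  have "card (UNIV::'a set) = p ^ (2 * k)"
    using card_field q_def by (simp add: power_mult mult.commute)
  thus ?thesis
    unfolding ff_degree_def CHAR_eq using power_inject_exp[OF p_gt_1] by (intro the_equality) auto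
qed

lemma abs_trace_eq: "abs_trace (c::'a) = (\<Sum>i<2*k. c ^ p ^ i)"
  unfolding abs_trace_def ff_degree_eq CHAR_eq ..

lemma frobenius_add: "(x + y :: 'a) ^ p ^ i = x ^ p ^ i + y ^ p ^ i"
  by (rule freshmans_dream') (simp_all add: CHAR_eq prime_p)

lemma frobenius_sum: "(sum f A :: 'a) ^ p ^ i = (\<Sum>j\<in>A. f j ^ p ^ i)"
  by (rule freshmans_dream_sum') (simp_all add: CHAR_eq prime_p)

lemma frobenius_uminus: "(- x :: 'a) ^ p ^ i = - (x ^ p ^ i)"
proof -
  have "x ^ p ^ i + (- x) ^ p ^ i = 0"
    using frobenius_add[of x "- x" i] p_gt_1 by (simp add: power_0_left)
  thus ?thesis by (simp add: eq_neg_iff_add_eq_0 add.commute)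
qed

lemma nonzero_power_q_minus_1_q_plus_1: "(x::'a) \<noteq> 0 \<Longrightarrow> x ^ ((q - 1) * (q + 1)) = 1"
  using nonzero_power_card_minus_1[of x] card_field q_ge_2
  by (simp add: power2_eq_square algebra_simps)

lemma power_card_field: "(x::'a) ^ (q ^ 2) = x"
proof (cases "x = 0")
  case False
  have "q ^ 2 = Suc ((q - 1) * (q + 1))"
    using q_ge_2 by (cases q) (simp_all add: power2_eq_square)
  thus ?thesis using nonzero_power_q_minus_1_q_plus_1[OF False] by simp
qed (use q_ge_2 in simp)

lemma power_q_q: "((x::'a) ^ q) ^ q = x"
  using power_card_field[of x] by (simp add: power2_eq_square power_mult)

lemma of_nat_power_p: "(of_nat j :: 'a) ^ p = of_nat j"
proof (induction j)
  case (Suc j)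
  thus ?case using frobenius_add[of "of_nat j" 1 1] by (simp add: add.commute)
qed (use p_gt_1 in simp)

lemma power_p_eq_self_imp_of_nat:
  assumes "(y::'a) ^ p = y"
  shows "\<exists>j<p. of_nat j = y"
proof -
  let ?S = "(of_nat :: nat \<Rightarrow> 'a) ` {..<p}" and ?R = "{y::'a. y ^ p = y}"
  have "inj_on (of_nat :: nat \<Rightarrow> 'a) {..<p}"
    by (auto intro!: inj_onI simp: of_nat_eq_iff_cong_CHAR CHAR_eq cong_def)
  hence card_S: "card ?S = p"
    by (simp add: card_image)
  have "y = 0 \<or> y ^ (p - 1) = 1" if "y ^ p = y" for y :: 'a
  proof -
    have "y * y ^ (p - 1) = y * 1"
      using that p_gt_1 by (cases p) simp_all
    thus ?thesis by (cases "y = 0") auto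
  qed
  hence "?R \<subseteq> insert 0 {y. y ^ (p - 1) = 1}"
    by blast
  hence "card ?R \<le> card (insert 0 {y::'a. y ^ (p - 1) = 1})"
    by (intro card_mono) auto
  also have "\<dots> \<le> Suc (card {y::'a. y ^ (p - 1) = 1})"
    by (rule card_insert_le_m1) auto
  also have "\<dots> \<le> p"
    using card_power_eq_le[of "p - 1" "1::'a"] p_gt_1 by simp
  finally have "card ?R \<le> card ?S"
    using card_S by simp
  moreover have "?S \<subseteq> ?R"
    using of_nat_power_p by auto
  ultimately have "?S = ?R"
    using card_mono[of ?R ?S] by (intro card_subset_eq) auto
  hence "y \<in> ?S"
    using assms by simp
  thus ?thesis by auto
qed

lemma abs_trace_add: "abs_trace (u + v :: 'a) = abs_trace u + abs_trace v"
  unfolding abs_trace_eq by (simp add: frobenius_add sum.distrib)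

lemma abs_trace_power_p: "abs_trace (c::'a) ^ p = abs_trace c"
proof -
  obtain m where m: "2 * k = Suc m"
    using k_pos by (cases "2 * k") auto
  have "q ^ 2 = p ^ Suc m"
    unfolding q_def m[symmetric] by (metis power_mult mult.commute)
  hence wrap: "c ^ p ^ Suc m = c"
    using power_card_field[of c] by simp
  have "abs_trace c ^ p ^ 1 = (\<Sum>i<Suc m. c ^ p ^ Suc i)"
    unfolding abs_trace_eq m frobenius_sum by (simp add: power_mult [symmetric] mult.commute)
  also have "\<dots> = (\<Sum>i<Suc m. c ^ p ^ i)"
    using sum.lessThan_Suc_shift[of "\<lambda>i. c ^ p ^ i" "Suc m"] sum.lessThan_Suc[of "\<lambda>i. c ^ p ^ i" "Suc m"] wrap
    by simp
  finally show ?thesis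
    by (simp add: abs_trace_eq m)
qed

text \<open>The absolute trace lies in the prime field; trace_rep c is its representative in {0..<p},
  the number k in the definition of can_add_char.\<close>
definition trace_rep :: "'a \<Rightarrow> nat" where
  "trace_rep c = (THE j. j < p \<and> of_nat j = abs_trace c)"

lemma trace_rep: "trace_rep c < p \<and> of_nat (trace_rep c) = abs_trace c"
proof -
  have "\<exists>!j. j < p \<and> of_nat j = abs_trace c"
  proof (rule ex_ex1I)
    show "\<exists>j. j < p \<and> of_nat j = abs_trace c"
      using power_p_eq_self_imp_of_nat[OF abs_trace_power_p] by blast
  next
    fix j l assume "j < p \<and> of_nat j = abs_trace c" "l < p \<and> of_nat l = abs_trace c"
    hence "(of_nat j :: 'a) = of_nat l" "j < p" "l < p"
      by auto
    hence "j mod p = l mod p" "j < p" "l < p"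
      by (auto simp only: of_nat_eq_iff_cong_CHAR CHAR_eq cong_def)
    thus "j = l" by simp
  qed
  thus ?thesis
    unfolding trace_rep_def by (rule theI')
qed

lemma can_add_char_eq_cis_of_nat:
  assumes "of_nat j = abs_trace (c::'a)"
  shows "can_add_char c = cis (2 * pi * real j / real p)"
proof -
  have "of_nat (trace_rep c) = (of_nat j :: 'a)"
    using trace_rep[of c] assms by simp
  hence "trace_rep c = j mod p"
    using trace_rep[of c] by (auto simp: of_nat_eq_iff_cong_CHAR CHAR_eq cong_def)
  moreover have "real j = real (j mod p) + real p * real (j div p)"
    by (metis mod_mult_div_eq of_nat_add of_nat_mult)
  hence "2 * pi * real j / real p = 2 * pi * real (j mod p) / real p + 2 * pi * real (j div p)"
    using p_gt_1 by (simp add: field_simps)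
  ultimately show ?thesis
    unfolding can_add_char_def Let_def CHAR_eq trace_rep_def[symmetric]
    by (simp add: cis_mult[symmetric])
qed

lemma can_add_char_add: "can_add_char (u + v :: 'a) = can_add_char u * can_add_char v"
proof -
  have "of_nat (trace_rep u + trace_rep v) = abs_trace (u + v)"
    using trace_rep[of u] trace_rep[of v] abs_trace_add by simp
  hence "can_add_char (u + v) = cis (2 * pi * real (trace_rep u + trace_rep v) / real p)"
    by (rule can_add_char_eq_cis_of_nat)
  also have "\<dots> = can_add_char u * can_add_char v"
    using can_add_char_eq_cis_of_nat[OF conjunct2[OF trace_rep]]
    by (simp add: cis_mult add_divide_distrib distrib_left)
  finally show ?thesis .
qed

lemma can_add_char_eq_1_iff: "can_add_char (c::'a) = 1 \<longleftrightarrow> abs_trace c = 0"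
proof
  assume "abs_trace c = 0"
  thus "can_add_char c = 1"
    using can_add_char_eq_cis_of_nat[of 0 c] by simp
next
  assume "can_add_char c = 1"
  then obtain m :: int where "2 * pi * real (trace_rep c) / real p = of_int m * (2 * pi)"
    using can_add_char_eq_cis_of_nat[OF conjunct2[OF trace_rep]] by (auto simp: cis_eq_1_iff)
  hence "int (trace_rep c) = m * int p"
    using p_gt_1 by (simp add: field_simps) (metis of_int_eq_iff of_int_mult of_int_of_nat_eq)
  hence "p dvd trace_rep c"
    by (metis dvdI mult.commute int_dvd_int_iff)
  hence "trace_rep c = 0"
    using nat_dvd_not_less[of "trace_rep c" p] trace_rep[of c] by auto
  thus "abs_trace c = 0"
    using trace_rep[of c] by simp
qed

definition Fq :: "'a set" where
  "Fq = {y. y ^ q = y}"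

definition rel_trace :: "'a \<Rightarrow> 'a" where
  "rel_trace c = c + c ^ q"

lemma frobenius_q_add: "(x + y :: 'a) ^ q = x ^ q + y ^ q"
  unfolding q_def by (rule frobenius_add)

lemma Fq_add: "x \<in> Fq \<Longrightarrow> y \<in> Fq \<Longrightarrow> x + y \<in> Fq"
  unfolding Fq_def by (simp add: frobenius_q_add)

lemma Fq_uminus: "x \<in> Fq \<Longrightarrow> - x \<in> Fq"
  unfolding Fq_def using frobenius_uminus[of x k] q_def by simp

lemma Fq_mult: "x \<in> Fq \<Longrightarrow> y \<in> Fq \<Longrightarrow> x * y \<in> Fq"
  unfolding Fq_def by (simp add: power_mult_distrib)

lemma Fq_inverse: "x \<in> Fq \<Longrightarrow> inverse x \<in> Fq"
  unfolding Fq_def by (simp add: power_inverse)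

lemma Fq_power_int:
  assumes "x \<in> Fq"
  shows "x powi e \<in> Fq"
proof -
  have "(x powi e) ^ q = (x ^ q) powi e"
    by (simp add: power_int_power' power_int_power mult.commute)
  thus ?thesis
    using assms unfolding Fq_def by simp
qed

lemma power_q_plus_1_in_Fq: "(x::'a) ^ (q + 1) \<in> Fq"
  unfolding Fq_def by (simp add: power_mult_distrib power_q_q mult.commute)

lemma rel_trace_in_Fq: "rel_trace c \<in> Fq"
  unfolding rel_trace_def Fq_def by (simp add: frobenius_q_add power_q_q add.commute)

lemma rel_trace_add: "rel_trace (u + v) = rel_trace u + rel_trace v"
  unfolding rel_trace_def by (simp add: frobenius_q_add)

lemma rel_trace_mult_Fq: "y \<in> Fq \<Longrightarrow> rel_trace (y * c) = y * rel_trace c"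
  unfolding rel_trace_def Fq_def by (simp add: power_mult_distrib distrib_left)

lemma abs_trace_eq_rel_trace: "abs_trace c = (\<Sum>i<k. rel_trace c ^ p ^ i)"
proof -
  have split: "{..<2 * k} = {..<k} \<union> {k..<k + k}"
    by auto
  have "abs_trace c = (\<Sum>i<k. c ^ p ^ i) + (\<Sum>i\<in>{k..<k + k}. c ^ p ^ i)"
    unfolding abs_trace_eq split by (rule sum.union_disjoint) auto
  also have "(\<Sum>i\<in>{k..<k + k}. c ^ p ^ i) = (\<Sum>i<k. c ^ p ^ (i + k))"
    using sum.shift_bounds_nat_ivl[of "\<lambda>i. c ^ p ^ i" 0 k k] by (simp add: atLeast0LessThan)
  also have "\<dots> = (\<Sum>i<k. (c ^ q) ^ p ^ i)"
    by (intro sum.cong refl) (metis power_add power_mult mult.commute q_def)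
  finally show ?thesis
    unfolding rel_trace_def by (simp add: frobenius_add sum.distrib)
qed

lemma Fq_units_eq: "{y::'a. y ^ q = y \<and> y \<noteq> 0} = {y. y ^ (q - 1) = 1}"
proof -
  have "y ^ q = y \<and> y \<noteq> 0 \<longleftrightarrow> y ^ (q - 1) = 1" for y :: 'a
  proof (cases "y = 0")
    case False
    have "y ^ q = y * y ^ (q - 1)"
      using q_ge_2 by (cases q) auto
    thus ?thesis using False by auto
  qed (use q_ge_2 in \<open>simp add: power_0_left\<close>)
  thus ?thesis by blast
qed

lemma Fq_eq_insert_units: "Fq = insert 0 {y. y ^ (q - 1) = 1}"
proof -
  have "{y::'a. y ^ q = y} = insert 0 {y. y ^ q = y \<and> y \<noteq> 0}"
    using q_ge_2 by (auto simp: power_0_left)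
  thus ?thesis
    unfolding Fq_def Fq_units_eq .
qed

text \<open>The map x \<mapsto> x^(q-1) sends the (q - 1)(q + 1) nonzero elements into the (q+1)-th roots of
  unity with kernel F_q^*; as kernel and target have at most q - 1 and q + 1 elements, both
  bounds are attained.\<close>
lemma card_Fq_units_and_image_power_q_minus_1:
  "card {y::'a. y ^ (q - 1) = 1} = q - 1 \<and> (\<lambda>x::'a. x ^ (q - 1)) ` (UNIV - {0}) = {z. z ^ (q + 1) = 1}
    \<and> card {z::'a. z ^ (q + 1) = 1} = q + 1"
proof -
  let ?K = "{y::'a. y ^ (q - 1) = 1}" and ?I = "(\<lambda>x::'a. x ^ (q - 1)) ` (UNIV - {0})"
    and ?\<mu> = "{z::'a. z ^ (q + 1) = 1}"
  have "(x ^ (q - 1)) ^ (q + 1) = 1" if "x \<noteq> 0" for x :: 'a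
    using nonzero_power_q_minus_1_q_plus_1[OF that] by (simp only: power_mult)
  hence "?I \<subseteq> ?\<mu>"
    by auto
  hence I_le: "card ?I \<le> card ?\<mu>"
    by (intro card_mono) auto
  have \<mu>_le: "card ?\<mu> \<le> q + 1"
    by (rule card_power_eq_le) simp
  have K_le: "card ?K \<le> q - 1"
    using q_ge_2 by (intro card_power_eq_le) simp
  have "card (UNIV - {0::'a}) = card {x \<in> UNIV - {0::'a}. x ^ (q - 1) = 1} * card ?I"
    by (rule card_eq_card_kernel_mult_card_image[OF _ mult_subgroup_nonzero]) simp
  moreover have "{x \<in> UNIV - {0::'a}. x ^ (q - 1) = 1} = ?K"
    using q_ge_2 by (auto simp: power_0_left)
  moreover have "card (UNIV - {0::'a}) = (q - 1) * (q + 1)"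
    using card_field q_ge_2 by (simp add: card_Diff_subset power2_eq_square algebra_simps)
  ultimately have prod: "(q - 1) * (q + 1) = card ?K * card ?I"
    by simp
  also have "\<dots> \<le> card ?K * (q + 1)"
    using I_le \<mu>_le by (intro mult_le_mono2) linarith
  finally have "q - 1 \<le> card ?K"
    by (simp only: mult_le_cancel2)
  hence K: "card ?K = q - 1"
    using K_le by simp
  hence "(q - 1) * card ?I = (q - 1) * (q + 1)"
    using prod by simp
  moreover have "q - 1 \<noteq> 0"
    using q_ge_2 by simp
  ultimately have "card ?I = q + 1"
    using mult_left_cancel by blast
  hence "?I = ?\<mu>"
    using I_le \<mu>_le \<open>?I \<subseteq> ?\<mu>\<close> by (intro card_subset_eq) auto
  with K \<open>card ?I = q + 1\<close> show ?thesis by simp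
qed

lemma card_Fq_units: "card {y::'a. y ^ (q - 1) = 1} = q - 1"
  using card_Fq_units_and_image_power_q_minus_1 by simp

lemma image_power_q_minus_1: "(\<lambda>x::'a. x ^ (q - 1)) ` (UNIV - {0}) = {z. z ^ (q + 1) = 1}"
  using card_Fq_units_and_image_power_q_minus_1 by simp

lemma zero_notin_Fq_units: "(0::'a) \<notin> {y. y ^ (q - 1) = 1}"
  using q_ge_2 by (simp add: power_0_left)

lemma power_q_minus_1_preimage:
  assumes "(z::'a) ^ (q + 1) = 1"
  obtains x\<^sub>0 where "x\<^sub>0 \<noteq> 0" "z = x\<^sub>0 ^ (q - 1)"
proof -
  have "z \<in> (\<lambda>x::'a. x ^ (q - 1)) ` (UNIV - {0})"
    using assms image_power_q_minus_1 by simp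
  thus ?thesis
    using that by (auto elim!: imageE)
qed

lemma card_roots_of_unity_q_plus_1: "card {z::'a. z ^ (q + 1) = 1} = q + 1"
  using card_Fq_units_and_image_power_q_minus_1 by simp

lemma card_Fq: "card Fq = q"
  using card_Fq_units zero_notin_Fq_units q_ge_2
  by (simp add: Fq_eq_insert_units finite_power_eq)

text \<open>The trace of F_q/F_p is a polynomial of degree p^(k-1) < q, so it cannot vanish on the
  q elements of F_q s.\<close>
lemma Fq_trace_nonvanishing:
  assumes "s \<in> Fq" "s \<noteq> 0"
  shows "\<exists>y\<in>Fq. (\<Sum>i<k. (y * s) ^ p ^ i) \<noteq> 0"
proof (rule ccontr)
  assume "\<not> ?thesis"
  hence vanish: "\<forall>y\<in>Fq. (\<Sum>i<k. (y * s) ^ p ^ i) = 0" by blast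
  define P :: "'a poly" where "P = (\<Sum>i<k. monom 1 (p ^ i))"
  have poly_P: "poly P x = (\<Sum>i<k. x ^ p ^ i)" for x
    unfolding P_def by (simp add: poly_sum poly_monom)
  have "coeff P 1 = (\<Sum>i<k. if i = 0 then 1 else 0)"
    unfolding P_def coeff_sum using p_gt_1 by (intro sum.cong refl) (auto simp: coeff_monom)
  also have "\<dots> = 1"
    using k_pos by simp
  finally have "P \<noteq> 0" by auto
  have "degree P \<le> p ^ (k - 1)"
    unfolding P_def using p_gt_1
    by (intro degree_sum_le) (auto intro!: order.trans[OF degree_monom_le] power_increasing)
  also have "p ^ (k - 1) < q"
    unfolding q_def using p_gt_1 k_pos by (intro power_strict_increasing) auto
  finally have deg: "degree P < q" .
  have "(\<lambda>y. y * s) ` Fq \<subseteq> {x. poly P x = 0}"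
    using vanish poly_P by auto
  hence "card ((\<lambda>y. y * s) ` Fq) \<le> card {x. poly P x = 0}"
    by (intro card_mono poly_roots_finite \<open>P \<noteq> 0\<close>)
  also have "\<dots> \<le> degree P"
    using \<open>P \<noteq> 0\<close> by (rule card_poly_roots_bound)
  finally have "card ((\<lambda>y. y * s) ` Fq) \<le> degree P" .
  hence "card Fq \<le> degree P"
    using assms by (subst (asm) card_image) (auto intro: inj_onI)
  thus False
    using deg card_Fq by simp
qed

lemma sum_can_add_char_Fq:
  "(\<Sum>y\<in>Fq. can_add_char (y * t)) = (if rel_trace t = 0 then of_nat q else 0)"
proof -
  have trace_yt: "abs_trace (y * t) = (\<Sum>i<k. (y * rel_trace t) ^ p ^ i)" if "y \<in> Fq" for y
    using that by (simp add: abs_trace_eq_rel_trace rel_trace_mult_Fq)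
  show ?thesis
  proof (cases "rel_trace t = 0")
    case True
    have "can_add_char (y * t) = 1" if "y \<in> Fq" for y
      using trace_yt[OF that] True p_gt_1 by (simp add: can_add_char_eq_1_iff power_0_left)
    hence "(\<Sum>y\<in>Fq. can_add_char (y * t)) = (\<Sum>y\<in>Fq. 1)"
      by (rule sum.cong[OF refl])
    thus ?thesis
      using True card_Fq by simp
  next
    case False
    obtain y\<^sub>0 where y\<^sub>0: "y\<^sub>0 \<in> Fq" "can_add_char (y\<^sub>0 * t) \<noteq> 1"
      using Fq_trace_nonvanishing[OF rel_trace_in_Fq False] trace_yt
      by (auto simp: can_add_char_eq_1_iff)
    define S where "S = (\<Sum>y\<in>Fq. can_add_char (y * t))"
    have shift: "y - y\<^sub>0 \<in> Fq" "y + y\<^sub>0 \<in> Fq" if "y \<in> Fq" for y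
      using Fq_add[OF that Fq_uminus[OF y\<^sub>0(1)]] Fq_add[OF that y\<^sub>0(1)] by simp_all
    have "S = (\<Sum>y\<in>Fq. can_add_char ((y + y\<^sub>0) * t))"
      unfolding S_def using shift
      by (intro sum.reindex_bij_witness[of _ "\<lambda>y. y + y\<^sub>0" "\<lambda>y. y - y\<^sub>0"]) simp_all
    also have "\<dots> = S * can_add_char (y\<^sub>0 * t)"
      unfolding S_def distrib_right can_add_char_add by (rule sum_distrib_right[symmetric])
    finally have "S * (can_add_char (y\<^sub>0 * t) - 1) = 0"
      by (simp add: algebra_simps)
    hence "S = 0"
      using y\<^sub>0(2) by simp
    thus ?thesis
      using False by (simp add: S_def)
  qed
qed

lemma sum_can_add_char_Fq_units:
  "(\<Sum>y\<in>{y. y ^ (q - 1) = 1}. can_add_char (y * t)) = (if rel_trace t = 0 then of_nat q - 1 else -1)"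
proof -
  have "abs_trace (0::'a) = 0"
    unfolding abs_trace_eq using p_gt_1 by (simp add: power_0_left)
  hence "(\<Sum>y\<in>Fq. can_add_char (y * t)) = 1 + (\<Sum>y\<in>{y. y ^ (q - 1) = 1}. can_add_char (y * t))"
    unfolding Fq_eq_insert_units using zero_notin_Fq_units q_ge_2
    by (simp add: finite_power_eq can_add_char_eq_1_iff)
  hence "(\<Sum>y\<in>{y. y ^ (q - 1) = 1}. can_add_char (y * t)) = (\<Sum>y\<in>Fq. can_add_char (y * t)) - 1"
    by simp
  thus ?thesis
    using sum_can_add_char_Fq[of t] by (cases "rel_trace t = 0") simp_all
qed

end

section \<open>Counting the zeros of the trace\<close>

locale T_sum_hyps = finite_field_q2 p k q field
  for p k q :: nat and field :: "'a::{field,finite} itself" +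
  fixes a b :: 'a and e\<^sub>1 e\<^sub>2 :: int
  assumes a_trace_nonzero: "a ^ q + a \<noteq> 0" and b_nonzero: "b \<noteq> 0"
    and gcd_e\<^sub>2: "gcd (int q + 1) e\<^sub>2 = 1"
begin

definition char_arg :: "'a \<Rightarrow> 'a" where
  "char_arg x = a * x powi (int (q + 1) * e\<^sub>1) + b * x powi e\<^sub>2"

definition trace_zeros :: "'a set" where
  "trace_zeros = {x. x \<noteq> 0 \<and> rel_trace (char_arg x) = 0}"

text \<open>On the coset x0 F_q^* the relative trace of char_arg is
  l^e2 (l^(2 e1 - e2) coset_coeff x0 + coset_const x0); the exponents are reduced to natural
  numbers modulo the orders q - 1 and q + 1 of the groups they act on.\<close>
definition coset_coeff :: "'a \<Rightarrow> 'a" where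
  "coset_coeff x\<^sub>0 = (x\<^sub>0 ^ (q + 1)) powi e\<^sub>1 * rel_trace a"

definition coset_const :: "'a \<Rightarrow> 'a" where
  "coset_const x\<^sub>0 = rel_trace (b * x\<^sub>0 powi e\<^sub>2)"

definition d_mod :: nat where
  "d_mod = nat ((2 * e\<^sub>1 - e\<^sub>2) mod int (q - 1))"

definition e\<^sub>2_mod :: nat where
  "e\<^sub>2_mod = nat (e\<^sub>2 mod int (q + 1))"

lemma T_sum_eq: "T_sum q e\<^sub>1 e\<^sub>2 a b = of_nat q * of_nat (card trace_zeros) - of_nat (q ^ 2 - 1)"
proof -
  have "T_sum q e\<^sub>1 e\<^sub>2 a b = (\<Sum>y\<in>{y. y ^ (q - 1) = 1}. \<Sum>x\<in>UNIV - {0}. can_add_char (y * char_arg x))"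
    unfolding T_sum_def S_sum_def Fq_units_eq
    by (intro sum.cong refl) (simp add: char_arg_def distrib_left mult.assoc)
  also have "\<dots> = (\<Sum>x\<in>UNIV - {0}. \<Sum>y\<in>{y. y ^ (q - 1) = 1}. can_add_char (y * char_arg x))"
    by (rule sum.swap)
  also have "\<dots> = (\<Sum>x\<in>UNIV - {0}. of_nat q * (if x \<in> trace_zeros then 1 else 0) - 1)"
    unfolding sum_can_add_char_Fq_units trace_zeros_def by (intro sum.cong refl) simp
  also have "\<dots> = of_nat q * of_nat (card trace_zeros) - of_nat (card (UNIV - {0::'a}))"
  proof -
    have "trace_zeros \<subseteq> UNIV - {0}"
      unfolding trace_zeros_def by auto
    hence "(\<Sum>x\<in>UNIV - {0::'a}. if x \<in> trace_zeros then 1 else 0) = (of_nat (card trace_zeros) :: complex)"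
      by (simp add: sum.If_cases Int_absorb1)
    thus ?thesis
      by (simp add: sum_subtractf flip: sum_distrib_left)
  qed
  also have "card (UNIV - {0::'a}) = q ^ 2 - 1"
    using card_field by (simp add: card_Diff_subset)
  finally show ?thesis .
qed

lemma T_sum_eq_1_iff: "T_sum q e\<^sub>1 e\<^sub>2 a b = 1 \<longleftrightarrow> card trace_zeros = q"
proof -
  have "of_nat (q ^ 2 - 1) = (of_nat (q ^ 2) :: complex) - 1"
    using q_ge_2 by (simp add: of_nat_diff)
  hence "T_sum q e\<^sub>1 e\<^sub>2 a b = 1 \<longleftrightarrow> of_nat (q * card trace_zeros) = (of_nat (q * q) :: complex)"
    unfolding T_sum_eq by (simp add: power2_eq_square)
  also have "\<dots> \<longleftrightarrow> card trace_zeros = q"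
    using q_ge_2 by (simp only: of_nat_eq_iff) simp
  finally show ?thesis .
qed

lemma rel_trace_a_nonzero: "rel_trace a \<noteq> 0"
  using a_trace_nonzero unfolding rel_trace_def by (simp add: add.commute)

lemma rel_trace_char_arg_coset:
  assumes "l ^ (q - 1) = 1"
  shows "rel_trace (char_arg (x\<^sub>0 * l)) = l powi e\<^sub>2 * (l powi (2 * e\<^sub>1 - e\<^sub>2) * coset_coeff x\<^sub>0 + coset_const x\<^sub>0)"
proof -
  have l: "l \<noteq> 0" "l \<in> Fq"
    using assms Fq_units_eq q_ge_2 unfolding Fq_def by (auto simp: power_0_left)
  have "(x\<^sub>0 * l) powi (int (q + 1) * e\<^sub>1) = ((x\<^sub>0 * l) ^ (q + 1)) powi e\<^sub>1"
    by (simp only: power_int_power)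
  also have "(x\<^sub>0 * l) ^ (q + 1) = x\<^sub>0 ^ (q + 1) * l ^ 2"
    using l(2) unfolding Fq_def by (simp add: power_mult_distrib power2_eq_square)
  also have "(x\<^sub>0 ^ (q + 1) * l ^ 2) powi e\<^sub>1 = l powi (2 * e\<^sub>1) * (x\<^sub>0 ^ (q + 1)) powi e\<^sub>1"
    by (simp add: power_int_mult_distrib power_int_power mult.commute)
  finally have "(x\<^sub>0 * l) powi (int (q + 1) * e\<^sub>1) = l powi (2 * e\<^sub>1) * (x\<^sub>0 ^ (q + 1)) powi e\<^sub>1" .
  moreover have "l powi (2 * e\<^sub>1) = l powi (2 * e\<^sub>1 - e\<^sub>2) * l powi e\<^sub>2"
    using l by (simp flip: power_int_add)
  ultimately have "char_arg (x\<^sub>0 * l) =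
      (l powi (2 * e\<^sub>1 - e\<^sub>2) * l powi e\<^sub>2 * (x\<^sub>0 ^ (q + 1)) powi e\<^sub>1) * a + l powi e\<^sub>2 * (b * x\<^sub>0 powi e\<^sub>2)"
    unfolding char_arg_def by (simp add: power_int_mult_distrib mult_ac)
  moreover have "l powi (2 * e\<^sub>1 - e\<^sub>2) * l powi e\<^sub>2 * (x\<^sub>0 ^ (q + 1)) powi e\<^sub>1 \<in> Fq"
    by (intro Fq_mult Fq_power_int power_q_plus_1_in_Fq l(2))
  moreover have "l powi e\<^sub>2 \<in> Fq"
    by (intro Fq_power_int l(2))
  ultimately have "rel_trace (char_arg (x\<^sub>0 * l)) =
      (l powi (2 * e\<^sub>1 - e\<^sub>2) * l powi e\<^sub>2 * (x\<^sub>0 ^ (q + 1)) powi e\<^sub>1) * rel_trace a + l powi e\<^sub>2 * coset_const x\<^sub>0"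
    unfolding coset_const_def by (simp only: rel_trace_add rel_trace_mult_Fq)
  thus ?thesis
    unfolding coset_coeff_def by (simp add: algebra_simps)
qed

lemma mem_trace_zeros_coset_iff:
  assumes "x\<^sub>0 \<noteq> 0" "l ^ (q - 1) = 1"
  shows "x\<^sub>0 * l \<in> trace_zeros \<longleftrightarrow> l ^ d_mod = - coset_const x\<^sub>0 / coset_coeff x\<^sub>0"
proof -
  have "l \<noteq> 0" "coset_coeff x\<^sub>0 \<noteq> 0"
    using assms q_ge_2 rel_trace_a_nonzero by (auto simp: coset_coeff_def power_0_left)
  hence "x\<^sub>0 * l \<in> trace_zeros \<longleftrightarrow> l powi (2 * e\<^sub>1 - e\<^sub>2) * coset_coeff x\<^sub>0 = - coset_const x\<^sub>0"
    unfolding trace_zeros_def using assms(1) rel_trace_char_arg_coset[OF assms(2)]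
    by (simp add: eq_neg_iff_add_eq_0)
  also have "\<dots> \<longleftrightarrow> l powi (2 * e\<^sub>1 - e\<^sub>2) = - coset_const x\<^sub>0 / coset_coeff x\<^sub>0"
    using \<open>coset_coeff x\<^sub>0 \<noteq> 0\<close> by (auto simp: field_simps)
  also have "l powi (2 * e\<^sub>1 - e\<^sub>2) = l ^ d_mod"
    unfolding d_mod_def using assms(2) q_ge_2 by (intro power_int_eq_power_mod) auto
  finally show ?thesis .
qed

lemma card_trace_zeros_coset:
  assumes "x\<^sub>0 \<noteq> 0"
  shows "card {x \<in> trace_zeros. x ^ (q - 1) = x\<^sub>0 ^ (q - 1)}
    = card {l. l ^ (q - 1) = 1 \<and> l ^ d_mod = - coset_const x\<^sub>0 / coset_coeff x\<^sub>0}"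
proof -
  have "{h \<in> UNIV - {0}. h ^ (q - 1) = 1} = {l::'a. l ^ (q - 1) = 1}"
    using zero_notin_Fq_units by auto
  hence coset: "{x \<in> UNIV - {0}. x ^ (q - 1) = x\<^sub>0 ^ (q - 1)} = (\<lambda>l. x\<^sub>0 * l) ` {l. l ^ (q - 1) = 1}"
    using power_fibre_eq_image_kernel[OF mult_subgroup_nonzero, of x\<^sub>0 "q - 1"] assms by simp
  have "{x \<in> trace_zeros. x ^ (q - 1) = x\<^sub>0 ^ (q - 1)}
      = {x \<in> UNIV - {0}. x ^ (q - 1) = x\<^sub>0 ^ (q - 1)} \<inter> trace_zeros"
    unfolding trace_zeros_def by auto
  also have "\<dots> = (\<lambda>l. x\<^sub>0 * l) ` {l. l ^ (q - 1) = 1 \<and> l ^ d_mod = - coset_const x\<^sub>0 / coset_coeff x\<^sub>0}"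
    unfolding coset using mem_trace_zeros_coset_iff[OF assms] by auto
  finally show ?thesis
    using assms by (simp add: card_image inj_on_def)
qed

lemma card_trace_zeros_eq_sum:
  "card trace_zeros = (\<Sum>z\<in>{z. z ^ (q + 1) = 1}. card {x \<in> trace_zeros. x ^ (q - 1) = z})"
proof -
  have "(\<lambda>x. x ^ (q - 1)) ` trace_zeros \<subseteq> {z. z ^ (q + 1) = 1}"
    using image_power_q_minus_1 unfolding trace_zeros_def by auto
  thus ?thesis
    using sum.group[of trace_zeros "{z. z ^ (q + 1) = 1}" "\<lambda>x. x ^ (q - 1)" "\<lambda>_. 1::nat"]
    by (simp add: finite_power_eq)
qed

lemma coset_const_eq_0_iff:
  assumes "x\<^sub>0 \<noteq> 0"
  shows "coset_const x\<^sub>0 = 0 \<longleftrightarrow> (x\<^sub>0 ^ (q - 1)) ^ e\<^sub>2_mod = - inverse (b ^ (q - 1))"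
proof -
  define w where "w = b * x\<^sub>0 powi e\<^sub>2"
  have "w \<noteq> 0"
    unfolding w_def using assms b_nonzero by simp
  have "w ^ q = w * w ^ (q - 1)"
    using q_ge_2 by (cases q) auto
  hence "coset_const x\<^sub>0 = 0 \<longleftrightarrow> w * w ^ (q - 1) = w * (-1)"
    unfolding coset_const_def rel_trace_def w_def[symmetric] by (simp add: add_eq_0_iff)
  also have "\<dots> \<longleftrightarrow> w ^ (q - 1) = -1"
    using \<open>w \<noteq> 0\<close> by (simp only: mult_cancel_left) simp
  also have "w ^ (q - 1) = b ^ (q - 1) * (x\<^sub>0 ^ (q - 1)) ^ e\<^sub>2_mod"
  proof -
    have "(x\<^sub>0 ^ (q - 1)) ^ (q + 1) = 1"
      using nonzero_power_q_minus_1_q_plus_1[OF assms] by (simp only: power_mult)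
    hence "(x\<^sub>0 ^ (q - 1)) powi e\<^sub>2 = (x\<^sub>0 ^ (q - 1)) ^ e\<^sub>2_mod"
      unfolding e\<^sub>2_mod_def by (intro power_int_eq_power_mod) simp_all
    thus ?thesis
      unfolding w_def by (simp add: power_mult_distrib power_int_power' power_int_power mult.commute)
  qed
  also have "b ^ (q - 1) * (x\<^sub>0 ^ (q - 1)) ^ e\<^sub>2_mod = -1 \<longleftrightarrow> (x\<^sub>0 ^ (q - 1)) ^ e\<^sub>2_mod = - inverse (b ^ (q - 1))"
    using b_nonzero by (auto simp: field_simps)
  finally show ?thesis .
qed

text \<open>By coset_const_eq_0_iff this counts the cosets with coset_const = 0; there is exactly one,
  since x \<mapsto> x^e2 permutes the (q+1)-th roots of unity.\<close>
lemma card_cosets_const_eq_0: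
  "card {z. z ^ (q + 1) = 1 \<and> z ^ e\<^sub>2_mod = - inverse (b ^ (q - 1))} = 1"
proof (rule card_roots_of_unity_power_preimage)
  show "coprime e\<^sub>2_mod (q + 1)"
    unfolding e\<^sub>2_mod_def using gcd_e\<^sub>2 gcd_int_eq_1_iff_coprime_mod[of "q + 1" e\<^sub>2] by (simp add: add.commute)
  have "(b ^ (q - 1)) ^ (q + 1) = 1"
    using nonzero_power_q_minus_1_q_plus_1[OF b_nonzero] by (simp only: power_mult)
  moreover have "(-1::'a) ^ (q + 1) = 1"
    using frobenius_uminus[of 1 k] q_def by simp
  ultimately show "(- inverse (b ^ (q - 1))) ^ (q + 1) = 1"
    unfolding power_minus[of "inverse _"] power_inverse by simp
qed simp

lemma card_trace_zeros_coset_if_coprime: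
  assumes "coprime d_mod (q - 1)" "z ^ (q + 1) = 1"
  shows "card {x \<in> trace_zeros. x ^ (q - 1) = z} = (if z ^ e\<^sub>2_mod = - inverse (b ^ (q - 1)) then 0 else 1)"
proof -
  obtain x\<^sub>0 where x\<^sub>0: "x\<^sub>0 \<noteq> 0" "z = x\<^sub>0 ^ (q - 1)"
    using assms(2) by (rule power_q_minus_1_preimage)
  let ?r = "- coset_const x\<^sub>0 / coset_coeff x\<^sub>0"
  have "?r \<in> Fq"
    unfolding coset_coeff_def coset_const_def divide_inverse
    by (intro Fq_mult Fq_uminus Fq_inverse Fq_power_int rel_trace_in_Fq power_q_plus_1_in_Fq)
  hence "?r ^ (q - 1) = 1 \<longleftrightarrow> ?r \<noteq> 0"
    unfolding Fq_eq_insert_units using zero_notin_Fq_units by auto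
  moreover have "?r = 0 \<longleftrightarrow> coset_const x\<^sub>0 = 0"
    using x\<^sub>0(1) rel_trace_a_nonzero by (simp add: coset_coeff_def)
  ultimately have "card {l. l ^ (q - 1) = 1 \<and> l ^ d_mod = ?r} = (if coset_const x\<^sub>0 = 0 then 0 else 1)"
    using card_roots_of_unity_power_preimage[OF _ assms(1), of ?r] q_ge_2 by auto
  thus ?thesis
    using card_trace_zeros_coset[OF x\<^sub>0(1)] coset_const_eq_0_iff[OF x\<^sub>0(1)] x\<^sub>0(2) by simp
qed

lemma card_trace_zeros_if_coprime:
  assumes "coprime d_mod (q - 1)"
  shows "card trace_zeros = q"
proof -
  let ?\<mu> = "{z::'a. z ^ (q + 1) = 1}" and ?P = "\<lambda>z::'a. z ^ e\<^sub>2_mod = - inverse (b ^ (q - 1))"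
  have "card trace_zeros = (\<Sum>z\<in>?\<mu>. if \<not> ?P z then 1 else 0)"
    unfolding card_trace_zeros_eq_sum using card_trace_zeros_coset_if_coprime[OF assms]
    by (intro sum.cong) auto
  also have "\<dots> = card {z \<in> ?\<mu>. \<not> ?P z}"
    by (simp add: sum.inter_filter[symmetric] finite_power_eq)
  also have "{z \<in> ?\<mu>. \<not> ?P z} = ?\<mu> - {z. z ^ (q + 1) = 1 \<and> ?P z}"
    by blast
  also have "card \<dots> = card ?\<mu> - 1"
    using card_cosets_const_eq_0 by (subst card_Diff_subset) (auto simp: finite_power_eq)
  finally show ?thesis
    using card_roots_of_unity_q_plus_1 by simp
qed

text \<open>Every coset contributes a multiple of the kernel size h of l \<mapsto> l^d on F_q^*, so h divides
  both q and q - 1.\<close>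
lemma coprime_if_card_trace_zeros:
  assumes "card trace_zeros = q"
  shows "coprime d_mod (q - 1)"
proof (rule coprime_if_power_kernel_trivial)
  let ?G = "{l::'a. l ^ (q - 1) = 1}"
  define h where "h = card {l \<in> ?G. l ^ d_mod = 1}"
  have q1: "q - 1 > 0"
    using q_ge_2 by simp
  have subgroup: "mult_subgroup ?G"
    using q1 by (rule mult_subgroup_roots_of_unity)
  have "h dvd card {x \<in> trace_zeros. x ^ (q - 1) = z}" if "z \<in> {z. z ^ (q + 1) = 1}" for z
  proof -
    have "z ^ (q + 1) = 1"
      using that by simp
    then obtain x\<^sub>0 where x\<^sub>0: "x\<^sub>0 \<noteq> 0" "z = x\<^sub>0 ^ (q - 1)"
      by (rule power_q_minus_1_preimage)
    have "card {x \<in> trace_zeros. x ^ (q - 1) = z}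
        = card {l \<in> ?G. l ^ d_mod = - coset_const x\<^sub>0 / coset_coeff x\<^sub>0}"
      using card_trace_zeros_coset[OF x\<^sub>0(1)] x\<^sub>0(2) by simp
    thus ?thesis
      unfolding h_def using card_kernel_dvd_card_power_preimage[OF subgroup] by simp
  qed
  hence "h dvd card trace_zeros"
    unfolding card_trace_zeros_eq_sum by (rule dvd_sum)
  hence "h dvd q"
    using assms by simp
  moreover have "q - 1 = h * card ((\<lambda>x. x ^ d_mod) ` ?G)"
    using card_eq_card_kernel_mult_card_image[OF finite_power_eq[OF q1] subgroup] card_Fq_units
    unfolding h_def by simp
  hence "h dvd q - 1"
    by (rule dvdI)
  ultimately have "h dvd q - (q - 1)"
    by (rule dvd_diff_nat)
  hence "h = 1"
    using q_ge_2 by simp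
  thus "card {l::'a. l ^ (q - 1) = 1 \<and> l ^ d_mod = 1} = 1"
    unfolding h_def by simp
qed (use q_ge_2 card_Fq_units in simp_all)

lemma gcd_eq_1_iff_card_trace_zeros: "gcd (int q - 1) (2 * e\<^sub>1 - e\<^sub>2) = 1 \<longleftrightarrow> card trace_zeros = q"
proof -
  have "gcd (int q - 1) (2 * e\<^sub>1 - e\<^sub>2) = 1 \<longleftrightarrow> coprime d_mod (q - 1)"
    unfolding d_mod_def using gcd_int_eq_1_iff_coprime_mod[of "q - 1"] q_ge_2 by (simp add: of_nat_diff)
  thus ?thesis
    using card_trace_zeros_if_coprime coprime_if_card_trace_zeros by auto
qed

end

theorem lemma3:
  fixes q :: nat and e1 e2 :: int and a b :: "'a::{field,finite}"
  assumes "\<exists>p k. prime p \<and> k > 0 \<and> q = p ^ k"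
    and "card (UNIV::'a set) = q ^ 2"
    and "a ^ q + a \<noteq> 0"
    and "b \<noteq> 0"
    and "gcd (int q + 1) e2 = 1"
  shows "gcd (int q - 1) (2 * e1 - e2) = 1 \<longleftrightarrow> T_sum q e1 e2 a b = 1"
proof -
  obtain p k where "prime p" "k > 0" "q = p ^ k"
    using assms(1) by blast
  then interpret T_sum_hyps p k q "TYPE('a)" a b e1 e2
    using assms(2-5) by unfold_locales auto
  show ?thesis
    using gcd_eq_1_iff_card_trace_zeros T_sum_eq_1_iff by simp
qed

end
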